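(* Let $L=\langle S,A,\to\rangle$ be a labelled transition system and $R\subseteq S\times S$. Then: $R$ is a weak bisimulation iff it is an $(o,o)$-generic bisimulation; $R$ is a delay bisimulation iff it is an $(o,b)$-generic bisimulation; $R$ is an $\eta$-bisimulation iff it is a $(b,o)$-generic bisimulation; $R$ is a branching bisimulation iff it is a $(b,b)$-generic bisimulation.
   Context: An LTS is $\langle S,A,\to\rangle$ with states $S$, actions $A$ containing the internal action $\tau$, and $\to\subseteq S\times A\times S$; write $s\xrightarrow{a}t$, and $\twoheadrightarrow$ for the reflexive-transitive closure of $\xrightarrow{\tau}$. All relations below are required to be symmetric, and the conditions are imposed whenever $s\,R\,t$ and $s\xrightarrow{a}s'$. Weak bisimulation: either $a=\tau$ and $s'\,R\,t$, or there exist $t',t_1,t_2$ with $t\twoheadrightarrow t_1\xrightarrow{a}t_2\twoheadrightarrow t'$ and $s'\,R\,t'$. Delay bisimulation: either $a=\tau$ and $s'\,R\,t$, or there exist $t',t_1$ with $t\twoheadrightarrow t_1\xrightarrow{a}t'$ and $s'\,R\,t'$. $\eta$-bisimulation: either $a=\tau$ and $s'\,R\,t$, or there exist $t',t_1,t_2$ with $t\twoheadrightarrow t_1\xrightarrow{a}t_2\twoheadrightarrow t'$, $s\,R\,t_1$ and $s'\,R\,t'$. Branching bisimulation: either $a=\tau$ and $s'\,R\,t$, or there exist $t',t_1$ with $t\twoheadrightarrow t_1\xrightarrow{a}t'$, $s\,R\,t_1$ and $s'\,R\,t'$. Generic: for $R\subseteq S\times S$ and $s,s',t$: $s\twoheadrightarrow_{o,R,t}s'$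 iff $s\twoheadrightarrow s'$; $s\twoheadrightarrow_{b,R,t}s'$ iff $s\twoheadrightarrow s'$, $t\,R\,s$ and $t\,R\,s'$. For $x,y\in\{o,b\}$, $R$ is an $(x,y)$-generic bisimulation if either $a=\tau$ and $s'\,R\,t$, or there exist $t',t_1,t_2$ with $t\twoheadrightarrow_{x,R,s}t_1\xrightarrow{a}t_2\twoheadrightarrow_{y,R,s'}t'$ and $s'\,R\,t'$. *)

theory Defs
  imports Main
begin

text \<open>An LTS is given by its transition relation step (states of type 's, actions
of type 'a) together with a distinguished internal action tau.\<close>

definition taus :: "('s \<Rightarrow> 'a \<Rightarrow> 's \<Rightarrow> bool) \<Rightarrow> 'a \<Rightarrow> 's \<Rightarrow> 's \<Rightarrow> bool" where
  "taus step tau = (\<lambda>x y. step x tau y)\<^sup>*\<^sup>*"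

definition weak_bisim :: "('s \<Rightarrow> 'a \<Rightarrow> 's \<Rightarrow> bool) \<Rightarrow> 'a \<Rightarrow> ('s \<Rightarrow> 's \<Rightarrow> bool) \<Rightarrow> bool" where
  "weak_bisim step tau R \<longleftrightarrow> symp R \<and>
     (\<forall>s t a s'. R s t \<and> step s a s' \<longrightarrow>
        (a = tau \<and> R s' t) \<or>
        (\<exists>t' t1 t2. taus step tau t t1 \<and> step t1 a t2 \<and> taus step tau t2 t' \<and> R s' t'))"

definition delay_bisim :: "('s \<Rightarrow> 'a \<Rightarrow> 's \<Rightarrow> bool) \<Rightarrow> 'a \<Rightarrow> ('s \<Rightarrow> 's \<Rightarrow> bool) \<Rightarrow> bool" where
  "delay_bisim step tau R \<longleftrightarrow> symp R \<and>
     (\<forall>s t a s'. R s t \<and> step s a s' \<longrightarrow>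
        (a = tau \<and> R s' t) \<or>
        (\<exists>t' t1. taus step tau t t1 \<and> step t1 a t' \<and> R s' t'))"

definition eta_bisim :: "('s \<Rightarrow> 'a \<Rightarrow> 's \<Rightarrow> bool) \<Rightarrow> 'a \<Rightarrow> ('s \<Rightarrow> 's \<Rightarrow> bool) \<Rightarrow> bool" where
  "eta_bisim step tau R \<longleftrightarrow> symp R \<and>
     (\<forall>s t a s'. R s t \<and> step s a s' \<longrightarrow>
        (a = tau \<and> R s' t) \<or>
        (\<exists>t' t1 t2. taus step tau t t1 \<and> step t1 a t2 \<and> taus step tau t2 t' \<and>
                    R s t1 \<and> R s' t'))"

definition branching_bisim :: "('s \<Rightarrow> 'a \<Rightarrow> 's \<Rightarrow> bool) \<Rightarrow> 'a \<Rightarrow> ('s \<Rightarrow> 's \<Rightarrow> bool) \<Rightarrow> bool" where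
  "branching_bisim step tau R \<longleftrightarrow> symp R \<and>
     (\<forall>s t a s'. R s t \<and> step s a s' \<longrightarrow>
        (a = tau \<and> R s' t) \<or>
        (\<exists>t' t1. taus step tau t t1 \<and> step t1 a t' \<and> R s t1 \<and> R s' t'))"

datatype mode = Mo | Mb

definition gen_taus :: "('s \<Rightarrow> 'a \<Rightarrow> 's \<Rightarrow> bool) \<Rightarrow> 'a \<Rightarrow> mode \<Rightarrow> ('s \<Rightarrow> 's \<Rightarrow> bool)
    \<Rightarrow> 's \<Rightarrow> 's \<Rightarrow> 's \<Rightarrow> bool" where
  "gen_taus step tau x R t s s' = (case x of
      Mo \<Rightarrow> taus step tau s s'
    | Mb \<Rightarrow> taus step tau s s' \<and> R t s \<and> R t s')"

definition generic_bisim :: "('s \<Rightarrow> 'a \<Rightarrow> 's \<Rightarrow> bool) \<Rightarrow> 'a \<Rightarrow> mode \<Rightarrow> mode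
    \<Rightarrow> ('s \<Rightarrow> 's \<Rightarrow> bool) \<Rightarrow> bool" where
  "generic_bisim step tau x y R \<longleftrightarrow> symp R \<and>
     (\<forall>s t a s'. R s t \<and> step s a s' \<longrightarrow>
        (a = tau \<and> R s' t) \<or>
        (\<exists>t' t1 t2. gen_taus step tau x R s t t1 \<and> step t1 a t2 \<and>
                    gen_taus step tau y R s' t2 t' \<and> R s' t'))"

end

theory Submission
  imports Defs
begin

text \<open>The generic clauses differ from the specific ones only in how the two
\<tau>-paths around the visible step are constrained. A leading b-path starts at t,
which is already related to s, so it only adds the condition s R t1. A trailing
b-path requires s' R t2, so its endpoint may be taken to be t2 itself and the path
dropped, which is exactly the delay form.\<close>

lemma taus_refl [simp]: "taus step tau s s"
  by (simp add: taus_def)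

lemma gen_taus_Mo [simp]: "gen_taus step tau Mo R t s s' \<longleftrightarrow> taus step tau s s'"
  by (simp add: gen_taus_def)

lemma gen_taus_Mb_from_related:
  assumes "R t s"
  shows "gen_taus step tau Mb R t s s' \<longleftrightarrow> taus step tau s s' \<and> R t s'"
  using assms by (simp add: gen_taus_def)

lemma ex_step_gen_taus_Mb_iff:
  "(\<exists>t' t1 t2. P t1 \<and> step t1 a t2 \<and> gen_taus step tau Mb R s' t2 t' \<and> R s' t')
     \<longleftrightarrow> (\<exists>t' t1. P t1 \<and> step t1 a t' \<and> R s' t')"
proof
  assume "\<exists>t' t1. P t1 \<and> step t1 a t' \<and> R s' t'"
  then obtain t' t1 where "P t1" "step t1 a t'" "R s' t'"
    by blast
  then have "P t1 \<and> step t1 a t' \<and> gen_taus step tau Mb R s' t' t' \<and> R s' t'"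
    by (simp add: gen_taus_def)
  then show "\<exists>t' t1 t2. P t1 \<and> step t1 a t2 \<and> gen_taus step tau Mb R s' t2 t' \<and> R s' t'"
    by blast
qed (auto simp: gen_taus_def)

theorem proposition4p6:
  fixes step :: "'s \<Rightarrow> 'a \<Rightarrow> 's \<Rightarrow> bool" and tau :: 'a and R :: "'s \<Rightarrow> 's \<Rightarrow> bool"
  shows "(weak_bisim step tau R \<longleftrightarrow> generic_bisim step tau Mo Mo R)
    \<and> (delay_bisim step tau R \<longleftrightarrow> generic_bisim step tau Mo Mb R)
    \<and> (eta_bisim step tau R \<longleftrightarrow> generic_bisim step tau Mb Mo R)
    \<and> (branching_bisim step tau R \<longleftrightarrow> generic_bisim step tau Mb Mb R)"
proof (intro conjI)
  show "weak_bisim step tau R \<longleftrightarrow> generic_bisim step tau Mo Mo R"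
    by (simp add: weak_bisim_def generic_bisim_def)
  show "delay_bisim step tau R \<longleftrightarrow> generic_bisim step tau Mo Mb R"
    unfolding delay_bisim_def generic_bisim_def gen_taus_Mo
    by (simp only: ex_step_gen_taus_Mb_iff)
  show "eta_bisim step tau R \<longleftrightarrow> generic_bisim step tau Mb Mo R"
    unfolding eta_bisim_def generic_bisim_def
    by (simp add: gen_taus_Mb_from_related conj_ac cong: imp_cong)
  show "branching_bisim step tau R \<longleftrightarrow> generic_bisim step tau Mb Mb R"
    unfolding branching_bisim_def generic_bisim_def ex_step_gen_taus_Mb_iff
    by (simp add: gen_taus_Mb_from_related conj_ac cong: imp_cong)
qed

end
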